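(* Fix the time-space domain, i.e. fix $T>0$ and $X>0$. If $\|e(u_t)\|_\infty=O(\Delta t)$, then $\|e(u)\|_{2,\Delta}\to 0$ as $\Delta t,\Delta x\to 0$.
   Context: The time-space domain is $[0,T]\times[0,X]^d$, sampled on a regular grid with time levels $t^n=n\Delta t$, $n=0,\dots,N$, $\Delta t=T/N$, and $M$ points per spatial dimension with spacing $\Delta x=X/(M-1)$. $u$ is the exact (smooth) solution of the true PDE and $u_t$ its exact time derivative at the grid points. $\widehat{U}$ is the numerical solution on the same grid of the identified PDE, and $D_t\widehat{U}$ its numerical time derivative computed by forward differences $(\widehat{U}^{n+1}-\widehat{U}^n)/\Delta t$. The errors are $e(u)=\widehat{U}-u$ and $e(u_t)=D_t\widehat{U}-u_t$, vectorized over all grid points; $\|\cdot\|_\infty$ is the max-norm and $\|v\|_{2,\Delta}=\sqrt{\Delta x^d\,\Delta t}\,\|v\|_2$ is the grid-dependent $L_2$ norm. *)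

theory Defs
  imports "HOL-Analysis.Analysis"
begin

text \<open>Grid on [0,T] x [0,X]^d, d = CARD('d). N time steps, M points per spatial dimension.\<close>

definition dt :: "real \<Rightarrow> nat \<Rightarrow> real" where
  "dt T N = T / real N"

definition dx :: "real \<Rightarrow> nat \<Rightarrow> real" where
  "dx X M = X / (real M - 1)"

definition grid_idx :: "nat \<Rightarrow> ('d::finite \<Rightarrow> nat) set" where
  "grid_idx M = {j. \<forall>i. j i < M}"

definition gpt :: "real \<Rightarrow> nat \<Rightarrow> ('d::finite \<Rightarrow> nat) \<Rightarrow> real ^ 'd" where
  "gpt X M j = (\<chi> i. real (j i) * dx X M)"

definition cube :: "real \<Rightarrow> (real ^ 'd::finite) set" where
  "cube X = {x. \<forall>i. 0 \<le> x $ i \<and> x $ i \<le> X}"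

text \<open>Forward difference in time of the numerical solution U (U n j = value at t^n, spatial index j).\<close>
definition Dt_hat :: "real \<Rightarrow> nat \<Rightarrow> (nat \<Rightarrow> ('d::finite \<Rightarrow> nat) \<Rightarrow> real) \<Rightarrow> nat \<Rightarrow> ('d \<Rightarrow> nat) \<Rightarrow> real" where
  "Dt_hat T N U n j = (U (Suc n) j - U n j) / dt T N"

text \<open>Max-norm of e(u_t) = D_t U - u_t over all grid points where the forward difference is defined (n < N).\<close>
definition err_ut_inf :: "real \<Rightarrow> real \<Rightarrow> nat \<Rightarrow> nat \<Rightarrow> (real \<Rightarrow> real ^ 'd::finite \<Rightarrow> real)
    \<Rightarrow> (nat \<Rightarrow> ('d \<Rightarrow> nat) \<Rightarrow> real) \<Rightarrow> real" where
  "err_ut_inf T X N M ut U =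
     Max {\<bar>Dt_hat T N U n j - ut (real n * dt T N) (gpt X M j)\<bar> | n j. n < N \<and> j \<in> grid_idx M}"

text \<open>Grid-dependent L2 norm of e(u) = U - u over all grid points (n = 0..N).\<close>
definition err_u_L2 :: "real \<Rightarrow> real \<Rightarrow> nat \<Rightarrow> nat \<Rightarrow> (real \<Rightarrow> real ^ 'd::finite \<Rightarrow> real)
    \<Rightarrow> (nat \<Rightarrow> ('d \<Rightarrow> nat) \<Rightarrow> real) \<Rightarrow> real" where
  "err_u_L2 T X N M u U =
     sqrt (dx X M ^ CARD('d) * dt T N) *
     sqrt (\<Sum>n\<le>N. \<Sum>j\<in>grid_idx M. (U n j - u (real n * dt T N) (gpt X M j))\<^sup>2)"

end

theory Submission
  imports Defs
begin

text \<open>Write e = U - u on the grid. One time step changes e by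
  \<open>\<Delta>t (D\<^sub>tU - u\<^sub>t)\<close> minus the Taylor remainder of u, so both contributions are
  \<open>O(\<Delta>t\<^sup>2)\<close>: the first by hypothesis, the second since \<open>u\<^sub>t\<^sub>t\<close> is continuous on the
  compact domain. As e vanishes initially, after at most \<open>N = T/\<Delta>t\<close> steps
  \<open>\<parallel>e\<parallel>\<^sub>\<infinity> = O(\<Delta>t)\<close>. The grid \<open>L\<^sub>2\<close> norm is bounded by the max-norm times the square root
  of the grid volume \<open>(N+1) \<Delta>t (M \<Delta>x)\<^sup>d \<le> 2T (2X)\<^sup>d\<close>, hence it is \<open>O(\<Delta>t)\<close> too.\<close>

lemma taylor_first_order_remainder_le:
  fixes f f' f'' :: "real \<Rightarrow> real"
  assumes f': "\<And>s. s \<in> {a..b} \<Longrightarrow> (f has_real_derivative f' s) (at s within {a..b})"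
    and f'': "\<And>s. s \<in> {a..b} \<Longrightarrow> (f' has_real_derivative f'' s) (at s within {a..b})"
    and K: "\<And>s. s \<in> {a..b} \<Longrightarrow> \<bar>f'' s\<bar> \<le> K"
    and t: "a \<le> t" "t + h \<le> b" "0 \<le> h"
  shows "\<bar>f (t + h) - f t - h * f' t\<bar> \<le> K * h\<^sup>2"
proof -
  have sub: "{t..t+h} \<subseteq> {a..b}" using t by auto
  have K0: "K \<ge> 0" using K[of t] t by auto
  have f'_near: "\<bar>f' s - f' t\<bar> \<le> K * h" if s: "s \<in> {t..t+h}" for s
  proof -
    have "norm (f' s - f' t) \<le> K * norm (s - t)"
      by (rule field_differentiable_bound[of "{t..s}"])
        (use s sub in \<open>auto intro!: DERIV_subset[OF f''] K\<close>)
    then have "\<bar>f' s - f' t\<bar> \<le> K * (s - t)" using s by simp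
    also have "\<dots> \<le> K * h" using s K0 by (auto intro!: mult_left_mono)
    finally show ?thesis .
  qed
  have "norm ((f (t+h) - (t+h) * f' t) - (f t - t * f' t)) \<le> (K * h) * norm (t + h - t)"
    by (rule field_differentiable_bound[of "{t..t+h}" _ "\<lambda>s. f' s - f' t"])
      (use sub f'_near t in \<open>auto intro!: derivative_eq_intros DERIV_subset[OF f']\<close>)
  then show ?thesis using t by (simp add: algebra_simps power2_eq_square)
qed

lemma abs_le_of_increments_le:
  fixes e :: "nat \<Rightarrow> real"
  assumes "e 0 = 0" and "\<And>k. k < n \<Longrightarrow> \<bar>e (Suc k) - e k\<bar> \<le> c"
  shows "\<bar>e n\<bar> \<le> real n * c"
  using assms(2)
proof (induction n)
  case (Suc n)
  then have "\<bar>e n\<bar> \<le> real n * c" and "\<bar>e (Suc n) - e n\<bar> \<le> c" by simp_all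
  then show ?case by (simp add: algebra_simps)
qed (simp add: assms(1))

lemma forward_difference_error_le:
  fixes u u' u'' :: "real \<Rightarrow> real" and U :: "nat \<Rightarrow> real"
  assumes u': "\<And>s. s \<in> {0..T} \<Longrightarrow> (u has_real_derivative u' s) (at s within {0..T})"
    and u'': "\<And>s. s \<in> {0..T} \<Longrightarrow> (u' has_real_derivative u'' s) (at s within {0..T})"
    and K: "\<And>s. s \<in> {0..T} \<Longrightarrow> \<bar>u'' s\<bar> \<le> K"
    and h: "h > 0" "real N * h \<le> T"
    and init: "U 0 = u 0"
    and consistent: "\<And>k. k < N \<Longrightarrow> \<bar>(U (Suc k) - U k) / h - u' (real k * h)\<bar> \<le> D"
    and n: "n \<le> N"
  shows "\<bar>U n - u (real n * h)\<bar> \<le> real n * (h * (D + K * h))"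
proof -
  define e where "e k = U k - u (real k * h)" for k
  have "\<bar>e (Suc k) - e k\<bar> \<le> h * (D + K * h)" if k: "k < N" for k
  proof -
    let ?t = "real k * h"
    have "real (Suc k) * h \<le> real N * h" using k h by (intro mult_right_mono) auto
    then have "?t + h \<le> T" using h by (simp add: algebra_simps)
    then have remainder: "\<bar>u (?t + h) - u ?t - h * u' ?t\<bar> \<le> K * h\<^sup>2"
      using h by (intro taylor_first_order_remainder_le[OF u' u'' K]) auto
    define q where "q = (U (Suc k) - U k) / h - u' ?t"
    have consistency: "\<bar>h * q\<bar> \<le> h * D"
      using consistent[OF k] h by (simp add: q_def abs_mult mult_left_mono)
    have "e (Suc k) - e k = h * q - (u (?t + h) - u ?t - h * u' ?t)"
      using h by (simp add: e_def q_def field_simps)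
    then have "\<bar>e (Suc k) - e k\<bar> \<le> h * D + K * h\<^sup>2"
      using consistency remainder by linarith
    then show ?thesis by (simp add: power2_eq_square algebra_simps)
  qed
  then have "\<bar>e n\<bar> \<le> real n * (h * (D + K * h))"
    using n init by (intro abs_le_of_increments_le) (auto simp: e_def)
  then show ?thesis by (simp add: e_def)
qed

lemma grid_idx_eq_PiE: "grid_idx M = PiE UNIV (\<lambda>_. {..<M})"
  by (auto simp: grid_idx_def PiE_def Pi_def)

lemma finite_grid_idx: "finite (grid_idx M :: ('d::finite \<Rightarrow> nat) set)"
  unfolding grid_idx_eq_PiE by (rule finite_PiE) auto

lemma card_grid_idx: "card (grid_idx M :: ('d::finite \<Rightarrow> nat) set) = M ^ CARD('d)"
  unfolding grid_idx_eq_PiE by (simp add: card_PiE)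

lemma compact_cube: "compact (cube X :: (real ^ 'd::finite) set)"
proof -
  have "cube X = cbox (vec 0) (vec X :: real ^ 'd)"
    by (auto simp: cube_def mem_box_cart)
  then show ?thesis by simp
qed

lemma gpt_in_cube:
  assumes "M \<ge> 2" "X > 0" "j \<in> grid_idx M"
  shows "gpt X M j \<in> cube X"
proof -
  have "real (j i) * (X / (real M - 1)) \<le> X" for i
  proof -
    have "j i < M" using assms by (auto simp: grid_idx_def)
    then have "real (j i) \<le> real M - 1" by linarith
    then have "real (j i) * (X / (real M - 1)) \<le> (real M - 1) * (X / (real M - 1))"
      using assms by (intro mult_right_mono) auto
    also have "\<dots> = X" using assms by simp
    finally show ?thesis .
  qed
  then show ?thesis using assms by (auto simp: cube_def gpt_def dx_def)
qed

lemma dt_mult_le: "N \<ge> 1 \<Longrightarrow> T \<ge> 0 \<Longrightarrow> dt T N * real (N + 1) \<le> 2 * T"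
  using mult_left_mono[of 1 "real N" T] by (simp add: dt_def field_simps)

lemma dx_mult_le: "M \<ge> 2 \<Longrightarrow> X \<ge> 0 \<Longrightarrow> dx X M * real M \<le> 2 * X"
  using mult_left_mono[of 2 "real M" X] by (simp add: dx_def field_simps)

lemma Dt_hat_error_le_err_ut_inf:
  assumes "n < N" "j \<in> grid_idx M"
  shows "\<bar>Dt_hat T N U n j - ut (real n * dt T N) (gpt X M j)\<bar> \<le> err_ut_inf T X N M ut U"
proof -
  have "finite {\<bar>Dt_hat T N U n j - ut (real n * dt T N) (gpt X M j)\<bar> | n j. n < N \<and> j \<in> grid_idx M}"
    by (rule finite_image_set2) (use finite_grid_idx in \<open>auto simp: Collect_mem_eq\<close>)
  then show ?thesis
    unfolding err_ut_inf_def by (rule Max_ge) (use assms in blast)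
qed

lemma grid_volume_le:
  assumes "N \<ge> 1" "M \<ge> 2" "T \<ge> 0" "X \<ge> 0"
  shows "dx X M ^ CARD('d::finite) * dt T N * (real (N + 1) * real M ^ CARD('d))
           \<le> (2 * X) ^ CARD('d) * (2 * T)"
proof -
  have "dx X M \<ge> 0" "dt T N \<ge> 0" using assms by (simp_all add: dx_def dt_def)
  then have "(dx X M * real M) ^ CARD('d) * (dt T N * real (N + 1)) \<le> (2 * X) ^ CARD('d) * (2 * T)"
    using assms by (intro mult_mono power_mono dx_mult_le dt_mult_le) auto
  then show ?thesis by (simp add: power_mult_distrib mult_ac)
qed

lemma err_u_L2_le_max_error:
  fixes U :: "nat \<Rightarrow> ('d::finite \<Rightarrow> nat) \<Rightarrow> real"
  assumes N: "N \<ge> 1" and M: "M \<ge> 2" and TX: "T \<ge> 0" "X \<ge> 0"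
    and E: "\<And>n j. n \<le> N \<Longrightarrow> j \<in> grid_idx M \<Longrightarrow> \<bar>U n j - u (real n * dt T N) (gpt X M j)\<bar> \<le> E"
  shows "err_u_L2 T X N M u U \<le> sqrt ((2 * X) ^ CARD('d) * (2 * T)) * E"
proof -
  let ?e = "\<lambda>n j. U n j - u (real n * dt T N) (gpt X M j)"
  define S where "S = (\<Sum>n\<le>N. \<Sum>j\<in>grid_idx M. (?e n j)\<^sup>2)"
  have E0: "E \<ge> 0" using E[of 0 "\<lambda>_. 0"] M by (auto simp: grid_idx_def)
  have "(?e n j)\<^sup>2 \<le> E\<^sup>2" if "n \<le> N" "j \<in> grid_idx M" for n j
    using power_mono[OF E[OF that] abs_ge_zero, of 2] by simp
  then have "S \<le> real (card {..N}) * (real (card (grid_idx M :: ('d \<Rightarrow> nat) set)) * E\<^sup>2)"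
    unfolding S_def by (intro sum_bounded_above) auto
  then have "S \<le> real (N + 1) * real M ^ CARD('d) * E\<^sup>2"
    by (simp add: card_grid_idx mult_ac)
  moreover have "dx X M ^ CARD('d) * dt T N \<ge> 0" using M N TX by (simp add: dx_def dt_def)
  ultimately have "dx X M ^ CARD('d) * dt T N * S
      \<le> dx X M ^ CARD('d) * dt T N * (real (N + 1) * real M ^ CARD('d)) * E\<^sup>2"
    by (metis mult_left_mono mult.assoc)
  also have "\<dots> \<le> (2 * X) ^ CARD('d) * (2 * T) * E\<^sup>2"
    using grid_volume_le[OF N M TX] by (intro mult_right_mono) auto
  finally have "sqrt (dx X M ^ CARD('d) * dt T N * S) \<le> sqrt ((2 * X) ^ CARD('d) * (2 * T) * E\<^sup>2)"
    by (rule real_sqrt_le_mono)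
  then show ?thesis
    using E0 by (simp add: err_u_L2_def S_def real_sqrt_mult)
qed

lemma grid_max_error_le:
  fixes u ut utt :: "real \<Rightarrow> real ^ 'd::finite \<Rightarrow> real"
    and U :: "nat \<Rightarrow> ('d \<Rightarrow> nat) \<Rightarrow> real"
  assumes T: "T > 0" and X: "X > 0" and N: "N \<ge> 1" and M: "M \<ge> 2"
    and u_t: "\<And>t x. t \<in> {0..T} \<Longrightarrow> x \<in> cube X \<Longrightarrow>
               ((\<lambda>s. u s x) has_real_derivative ut t x) (at t within {0..T})"
    and u_tt: "\<And>t x. t \<in> {0..T} \<Longrightarrow> x \<in> cube X \<Longrightarrow>
               ((\<lambda>s. ut s x) has_real_derivative utt t x) (at t within {0..T})"
    and K: "\<And>t x. t \<in> {0..T} \<Longrightarrow> x \<in> cube X \<Longrightarrow> \<bar>utt t x\<bar> \<le> K"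
    and init: "\<And>j. j \<in> grid_idx M \<Longrightarrow> U 0 j = u 0 (gpt X M j)"
    and consistent: "err_ut_inf T X N M ut U \<le> C * dt T N"
    and n: "n \<le> N" and j: "j \<in> grid_idx M"
  shows "\<bar>U n j - u (real n * dt T N) (gpt X M j)\<bar> \<le> T * (C + K) * dt T N"
proof -
  define h where "h = dt T N"
  have h: "h > 0" "real N * h = T" using N T by (simp_all add: h_def dt_def)
  have x: "gpt X M j \<in> cube X" using gpt_in_cube[OF M X j] .
  have Dt_hat_error: "\<bar>(U (Suc k) j - U k j) / h - ut (real k * h) (gpt X M j)\<bar> \<le> C * h"
    if "k < N" for k
    using Dt_hat_error_le_err_ut_inf[OF that j, of T U ut X] consistent
    by (simp add: Dt_hat_def h_def)
  have "0 \<le> C * h" using Dt_hat_error[of 0] N by (simp add: order_trans[OF abs_ge_zero])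
  then have C0: "C \<ge> 0" using h by (simp add: zero_le_mult_iff)
  have K0: "K \<ge> 0" using K[OF _ x, of 0] T by force
  have "\<bar>U n j - u (real n * h) (gpt X M j)\<bar> \<le> real n * (h * (C * h + K * h))"
  proof (rule forward_difference_error_le)
    show "((\<lambda>s. u s (gpt X M j)) has_real_derivative ut s (gpt X M j)) (at s within {0..T})"
      and "((\<lambda>s. ut s (gpt X M j)) has_real_derivative utt s (gpt X M j)) (at s within {0..T})"
      and "\<bar>utt s (gpt X M j)\<bar> \<le> K"
      if "s \<in> {0..T}" for s
      using u_t u_tt K that x by auto
  qed (use h init j n Dt_hat_error in auto)
  also have "\<dots> = real n * (h * ((C + K) * h))" by (simp add: algebra_simps)
  also have "\<dots> \<le> real N * (h * ((C + K) * h))"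
    using n h C0 K0 by (intro mult_right_mono) auto
  also have "\<dots> = T * (C + K) * h" by (simp flip: h(2) add: algebra_simps)
  finally show ?thesis by (simp add: h_def)
qed

lemma small_if_le_mult_dt:
  fixes F :: "nat \<Rightarrow> nat \<Rightarrow> real"
  assumes "T > 0" "\<delta>\<^sub>0 > 0"
    and F: "\<And>N M. N \<ge> 1 \<Longrightarrow> M \<ge> 2 \<Longrightarrow> dt T N < \<delta>\<^sub>0 \<Longrightarrow> dx X M < \<delta>\<^sub>0 \<Longrightarrow> F N M \<le> A * dt T N"
  shows "\<forall>\<epsilon>>0. \<exists>\<delta>>0. \<forall>N M. N \<ge> 1 \<longrightarrow> M \<ge> 2 \<longrightarrow> dt T N < \<delta> \<longrightarrow> dx X M < \<delta> \<longrightarrow> F N M < \<epsilon>"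
proof (intro allI impI)
  fix \<epsilon> :: real
  assume "\<epsilon> > 0"
  define \<delta> where "\<delta> = min \<delta>\<^sub>0 (\<epsilon> / (\<bar>A\<bar> + 1))"
  have "F N M < \<epsilon>" if "N \<ge> 1" "M \<ge> 2" "dt T N < \<delta>" "dx X M < \<delta>" for N M
  proof -
    have "dt T N > 0" "(\<bar>A\<bar> + 1) * dt T N < \<epsilon>"
      using that \<open>T > 0\<close> by (auto simp: \<delta>_def dt_def pos_less_divide_eq mult.commute)
    moreover have "A * dt T N \<le> \<bar>A\<bar> * dt T N"
      using \<open>dt T N > 0\<close> by (intro mult_right_mono) auto
    moreover have "F N M \<le> A * dt T N"
      using F that by (simp add: \<delta>_def)
    ultimately show ?thesis by (simp only: distrib_right mult_1)
  qed
  moreover have "\<delta> > 0" using \<open>\<delta>\<^sub>0 > 0\<close> \<open>\<epsilon> > 0\<close> by (simp add: \<delta>_def)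
  ultimately show "\<exists>\<delta>>0. \<forall>N M. N \<ge> 1 \<longrightarrow> M \<ge> 2 \<longrightarrow> dt T N < \<delta> \<longrightarrow> dx X M < \<delta> \<longrightarrow> F N M < \<epsilon>"
    by blast
qed

theorem corollary1:
  fixes T X :: real
    and u ut utt :: "real \<Rightarrow> real ^ 'd::finite \<Rightarrow> real"
    and Uhat :: "nat \<Rightarrow> nat \<Rightarrow> nat \<Rightarrow> ('d \<Rightarrow> nat) \<Rightarrow> real"
  assumes T_pos: "T > 0" and X_pos: "X > 0"
    and u_t: "\<And>t x. t \<in> {0..T} \<Longrightarrow> x \<in> cube X \<Longrightarrow>
               ((\<lambda>s. u s x) has_real_derivative ut t x) (at t within {0..T})"
    and u_tt: "\<And>t x. t \<in> {0..T} \<Longrightarrow> x \<in> cube X \<Longrightarrow>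
               ((\<lambda>s. ut s x) has_real_derivative utt t x) (at t within {0..T})"
    and utt_cont: "continuous_on ({0..T} \<times> cube X) (\<lambda>p. utt (fst p) (snd p))"
    and init: "\<And>N M j. j \<in> grid_idx M \<Longrightarrow> Uhat N M 0 j = u 0 (gpt X M j)"
    and err_ut_O: "\<exists>C \<delta>. \<delta> > 0 \<and> (\<forall>N M. N \<ge> 1 \<longrightarrow> M \<ge> 2 \<longrightarrow> dt T N < \<delta> \<longrightarrow> dx X M < \<delta> \<longrightarrow>
                     err_ut_inf T X N M ut (Uhat N M) \<le> C * dt T N)"
  shows "\<forall>\<epsilon>>0. \<exists>\<delta>>0. \<forall>N M. N \<ge> 1 \<longrightarrow> M \<ge> 2 \<longrightarrow> dt T N < \<delta> \<longrightarrow> dx X M < \<delta> \<longrightarrow>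
           err_u_L2 T X N M u (Uhat N M) < \<epsilon>"
proof -
  obtain C \<delta>\<^sub>0 where "\<delta>\<^sub>0 > 0" and C: "\<And>N M. N \<ge> 1 \<Longrightarrow> M \<ge> 2 \<Longrightarrow> dt T N < \<delta>\<^sub>0 \<Longrightarrow>
      dx X M < \<delta>\<^sub>0 \<Longrightarrow> err_ut_inf T X N M ut (Uhat N M) \<le> C * dt T N"
    using err_ut_O by blast
  have "bounded ((\<lambda>p. utt (fst p) (snd p)) ` ({0..T} \<times> cube X))"
    by (intro compact_imp_bounded compact_continuous_image utt_cont compact_Times compact_cube)
      simp
  then obtain K where "\<forall>y \<in> (\<lambda>p. utt (fst p) (snd p)) ` ({0..T} \<times> cube X). \<bar>y\<bar> \<le> K"
    unfolding bounded_real by blast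
  then have K: "\<And>t x. t \<in> {0..T} \<Longrightarrow> x \<in> cube X \<Longrightarrow> \<bar>utt t x\<bar> \<le> K"
    by fastforce
  have "err_u_L2 T X N M u (Uhat N M) \<le> sqrt ((2 * X) ^ CARD('d) * (2 * T)) * (T * (C + K)) * dt T N"
    if N: "N \<ge> 1" and M: "M \<ge> 2" and "dt T N < \<delta>\<^sub>0" "dx X M < \<delta>\<^sub>0" for N M
  proof -
    have "err_u_L2 T X N M u (Uhat N M) \<le> sqrt ((2 * X) ^ CARD('d) * (2 * T)) * (T * (C + K) * dt T N)"
      using grid_max_error_le[OF T_pos X_pos N M u_t u_tt K init C[OF that]] T_pos X_pos
      by (intro err_u_L2_le_max_error[OF N M]) auto
    then show ?thesis by (simp add: mult_ac)
  qed
  then show ?thesis by (rule small_if_le_mult_dt[OF T_pos \<open>\<delta>\<^sub>0 > 0\<close>])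
qed

end
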